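(* Suppose each net demand function $D_i$ ($i=1,\dots,N$) satisfies the Net Demand Assumption. Let $\mathcal L$ be the Lagrangian defined below. Then a vector $(\mathbf P^*,\mathcal Q^*,\mathbf E^*,\mathbf L^* )\in\mathbb R^N_{>0}\times\mathbb R^{N(N+2)}_{\ge0}$ is a saddle point of $\mathcal L$ on $\mathbb R^N_{\ge0}\times\mathbb R^{N(N+2)}_{\ge0}$ if and only if it is a competitive equilibrium.
   Context: Economy with $N$ sectors; sector $i$ has production function $F_i:\mathbb R^{N+2}_{\ge0}\to\mathbb R_{\ge0}$, labor cost $W_i:\mathbb R_{\ge0}\to\mathbb R_{>0}$; carbon price $P_E>0$ is fixed. An allocation is $(\mathcal Q,\mathbf E,\mathbf L)$ with $\mathcal Q=(q_{ij})_{i,j=1}^N$, $\mathbf q_i=(q_{ij})_j$, $\mathbf E=(E_i)$, $\mathbf L=(L_i)$, all nonnegative. Profit $\Pi_i(\mathbf P,P_E,\mathbf q_i,E_i,L_i)=P_iF_i(\mathbf q_i,E_i,L_i)-\sum_jP_jq_{ij}-P_EE_i-W_i(L_i)$. Net Demand Assumption: $D_i:\mathbb R_{\ge0}\to\mathbb R$ is strictly decreasing and continuous on $\mathbb R_{>0}$, with $\lim_{P\to0}D_i(P)=\infty$ and $\lim_{P\to\infty}D_i(P)\le0$. Consumer surplus $\Delta_i(P)=\int_1^PD_i(z)\,dz$ (i.e. $-\int_P^1D_i$ for $P\le1$, possibly $-\infty$ at $P=0$). Lagrangian: $\mathcal L(\mathbf P,\mathcal Q,\mathbf E,\mathbf L)=\sum_{i=1}^N\{P_iF_i(\mathbf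 q_i,E_i,L_i)-\sum_jP_jq_{ij}-P_EE_i-W_i(L_i)-\Delta_i(P_i)\}$. Saddle point: $(\mathbf P^*,\mathcal Q^*,\mathbf E^*,\mathbf L^* )$ with $\mathcal L(\mathbf P^*,\mathcal Q,\mathbf E,\mathbf L)\le\mathcal L(\mathbf P^*,\mathcal Q^*,\mathbf E^*,\mathbf L^* )\le\mathcal L(\mathbf P,\mathcal Q^*,\mathbf E^*,\mathbf L^* )$ for all $\mathbf P\in\mathbb R^N_{\ge0}$, $(\mathcal Q,\mathbf E,\mathbf L)\in\mathbb R^{N(N+2)}_{\ge0}$. Competitive equilibrium: $(\mathbf P^*,\mathcal Q^*,\mathbf E^*,\mathbf L^* )\in\mathbb R^N_{\ge0}\times\mathbb R^{N(N+2)}_{\ge0}$ such that for each $i$: (i) market clearing $F_i(\mathbf q_i^*,E_i^*,L_i^* )=D_i(P_i^* )+\sum_{j=1}^Nq^*_{ji}$; (ii) $(\mathbf q_i^*,E_i^*,L_i^* )$ maximizes $\Pi_i(\mathbf P^*,P_E,\cdot)$ over $\mathbb R^{N+2}_{\ge0}$. *)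

theory Defs
  imports "HOL-Analysis.Analysis"
begin

text \<open>Sectors are indexed by a finite type 'n (N = CARD('n)).
  Production functions: F i q E L with q :: 'n => real the vector of intermediate inputs.\<close>

definition net_demand_assumption :: "(real \<Rightarrow> real) \<Rightarrow> bool" where
  "net_demand_assumption D \<longleftrightarrow>
     strict_antimono_on {0<..} D \<and>
     continuous_on {0<..} D \<and>
     filterlim D at_top (at_right 0) \<and>
     (\<exists>l::ereal. ((\<lambda>P. ereal (D P)) \<longlongrightarrow> l) at_top \<and> l \<le> 0)"

text \<open>Consumer surplus Delta(P) = integral from 1 to P of D; at P = 0 it is the
  (extended real) limit from the right, i.e. minus the improper integral over (0,1],
  possibly -infinity.\<close>

definition surplus_pos :: "(real \<Rightarrow> real) \<Rightarrow> real \<Rightarrow> real" where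
  "surplus_pos D P = (if 1 \<le> P then integral {1..P} D else - integral {P..1} D)"

definition surplus :: "(real \<Rightarrow> real) \<Rightarrow> real \<Rightarrow> ereal" where
  "surplus D P = (if 0 < P then ereal (surplus_pos D P)
                  else Lim (at_right 0) (\<lambda>x. ereal (surplus_pos D x)))"

definition profit ::
  "('n \<Rightarrow> ('n \<Rightarrow> real) \<Rightarrow> real \<Rightarrow> real \<Rightarrow> real) \<Rightarrow> ('n \<Rightarrow> real \<Rightarrow> real) \<Rightarrow>
   ('n \<Rightarrow> real) \<Rightarrow> real \<Rightarrow> 'n \<Rightarrow> ('n \<Rightarrow> real) \<Rightarrow> real \<Rightarrow> real \<Rightarrow> real" where
  "profit F W P PE i qi Ei Li =
     P i * F i qi Ei Li - (\<Sum>j\<in>UNIV. P j * qi j) - PE * Ei - W i Li"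

definition lagrangian ::
  "('n::finite \<Rightarrow> ('n \<Rightarrow> real) \<Rightarrow> real \<Rightarrow> real \<Rightarrow> real) \<Rightarrow> ('n \<Rightarrow> real \<Rightarrow> real) \<Rightarrow>
   ('n \<Rightarrow> real \<Rightarrow> real) \<Rightarrow> real \<Rightarrow>
   ('n \<Rightarrow> real) \<Rightarrow> ('n \<Rightarrow> 'n \<Rightarrow> real) \<Rightarrow> ('n \<Rightarrow> real) \<Rightarrow> ('n \<Rightarrow> real) \<Rightarrow> ereal" where
  "lagrangian F W D PE P Q E L =
     (\<Sum>i\<in>UNIV. ereal (profit F W P PE i (Q i) (E i) (L i)) - surplus (D i) (P i))"

definition nonneg_alloc :: "('n \<Rightarrow> 'n \<Rightarrow> real) \<Rightarrow> ('n \<Rightarrow> real) \<Rightarrow> ('n \<Rightarrow> real) \<Rightarrow> bool" where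
  "nonneg_alloc Q E L \<longleftrightarrow> (\<forall>i j. 0 \<le> Q i j) \<and> (\<forall>i. 0 \<le> E i) \<and> (\<forall>i. 0 \<le> L i)"

definition saddle_point where
  "saddle_point F W D PE Ps Qs Es Ls \<longleftrightarrow>
     (\<forall>Q E L. nonneg_alloc Q E L \<longrightarrow>
        lagrangian F W D PE Ps Q E L \<le> lagrangian F W D PE Ps Qs Es Ls) \<and>
     (\<forall>P. (\<forall>i. 0 \<le> P i) \<longrightarrow>
        lagrangian F W D PE Ps Qs Es Ls \<le> lagrangian F W D PE P Qs Es Ls)"

definition competitive_equilibrium where
  "competitive_equilibrium F W D PE Ps Qs Es Ls \<longleftrightarrow>
     (\<forall>i. 0 \<le> Ps i) \<and> nonneg_alloc Qs Es Ls \<and>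
     (\<forall>i. F i (Qs i) (Es i) (Ls i) = D i (Ps i) + (\<Sum>j\<in>UNIV. Qs j i)) \<and>
     (\<forall>i. \<forall>q e l. (\<forall>j. 0 \<le> q j) \<and> 0 \<le> e \<and> 0 \<le> l \<longrightarrow>
        profit F W Ps PE i q e l \<le> profit F W Ps PE i (Qs i) (Es i) (Ls i))"

end

theory Submission
  imports Defs
begin

text \<open>For fixed prices the Lagrangian is the total profit of the sectors minus terms that do
  not depend on the allocation, and total profit is a sum of independent sector profits; so
  maximality in the allocation is exactly profit maximization in every sector. For a fixed
  allocation the Lagrangian is, up to a constant, the sum over sectors of
  \<open>P\<^sub>i x\<^sub>i - \<Delta>\<^sub>i(P\<^sub>i)\<close>, where \<open>x\<^sub>i\<close> is the excess supply of good \<open>i\<close>. Since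
  \<open>\<Delta>\<^sub>i' = D\<^sub>i\<close> is decreasing, \<open>\<Delta>\<^sub>i\<close> lies below its tangents (also in the limit at
  \<open>P\<^sub>i = 0\<close>), so this convex term is minimal at an interior price \<open>P\<^sub>i\<^sup>*\<close> iff its
  derivative \<open>x\<^sub>i - D\<^sub>i(P\<^sub>i\<^sup>*)\<close> vanishes, i.e. iff market \<open>i\<close> clears.\<close>

lemma ereal_sum_fun_upd_le_iff:
  fixes f :: "'i \<Rightarrow> 'a \<Rightarrow> ereal"
  assumes "finite I" "i \<in> I" "\<forall>k\<in>I. \<bar>f k (x k)\<bar> \<noteq> \<infinity>"
  shows "(\<Sum>k\<in>I. f k ((x(i := y)) k)) \<le> (\<Sum>k\<in>I. f k (x k)) \<longleftrightarrow> f i y \<le> f i (x i)"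
    and "(\<Sum>k\<in>I. f k (x k)) \<le> (\<Sum>k\<in>I. f k ((x(i := y)) k)) \<longleftrightarrow> f i (x i) \<le> f i y"
proof -
  let ?rest = "\<Sum>k\<in>I - {i}. f k (x k)"
  have "(\<Sum>k\<in>I. f k ((x(i := y)) k)) = f i y + ?rest"
    and "(\<Sum>k\<in>I. f k (x k)) = f i (x i) + ?rest"
    using assms by (simp_all add: sum.remove)
  moreover have "\<bar>?rest\<bar> \<noteq> \<infinity>"
    using assms by (simp add: sum_Inf)
  ultimately show "(\<Sum>k\<in>I. f k ((x(i := y)) k)) \<le> (\<Sum>k\<in>I. f k (x k)) \<longleftrightarrow> f i y \<le> f i (x i)"
    and "(\<Sum>k\<in>I. f k (x k)) \<le> (\<Sum>k\<in>I. f k ((x(i := y)) k)) \<longleftrightarrow> f i (x i) \<le> f i y"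
    by (auto simp: ereal_add_le_add_iff2)
qed

lemma ereal_sum_maximal_iff:
  fixes f :: "'i \<Rightarrow> 'a \<Rightarrow> ereal"
  assumes "finite I" "\<forall>i\<in>I. x\<^sub>0 i \<in> A i" "\<forall>i\<in>I. \<bar>f i (x\<^sub>0 i)\<bar> \<noteq> \<infinity>"
  shows "(\<forall>x. (\<forall>i\<in>I. x i \<in> A i) \<longrightarrow> (\<Sum>i\<in>I. f i (x i)) \<le> (\<Sum>i\<in>I. f i (x\<^sub>0 i)))
    \<longleftrightarrow> (\<forall>i\<in>I. \<forall>y\<in>A i. f i y \<le> f i (x\<^sub>0 i))"
proof (intro iffI ballI allI impI)
  fix i y
  assume "\<forall>x. (\<forall>i\<in>I. x i \<in> A i) \<longrightarrow> (\<Sum>i\<in>I. f i (x i)) \<le> (\<Sum>i\<in>I. f i (x\<^sub>0 i))"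
    and "i \<in> I" "y \<in> A i"
  then show "f i y \<le> f i (x\<^sub>0 i)"
    using assms ereal_sum_fun_upd_le_iff(1)[of I i f x\<^sub>0 y] by auto
qed (use assms in \<open>auto intro: sum_mono\<close>)

lemma ereal_sum_minimal_iff:
  fixes f :: "'i \<Rightarrow> 'a \<Rightarrow> ereal"
  assumes "finite I" "\<forall>i\<in>I. x\<^sub>0 i \<in> A i" "\<forall>i\<in>I. \<bar>f i (x\<^sub>0 i)\<bar> \<noteq> \<infinity>"
  shows "(\<forall>x. (\<forall>i\<in>I. x i \<in> A i) \<longrightarrow> (\<Sum>i\<in>I. f i (x\<^sub>0 i)) \<le> (\<Sum>i\<in>I. f i (x i)))
    \<longleftrightarrow> (\<forall>i\<in>I. \<forall>y\<in>A i. f i (x\<^sub>0 i) \<le> f i y)"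
proof (intro iffI ballI allI impI)
  fix i y
  assume "\<forall>x. (\<forall>i\<in>I. x i \<in> A i) \<longrightarrow> (\<Sum>i\<in>I. f i (x\<^sub>0 i)) \<le> (\<Sum>i\<in>I. f i (x i))"
    and "i \<in> I" "y \<in> A i"
  then show "f i (x\<^sub>0 i) \<le> f i y"
    using assms ereal_sum_fun_upd_le_iff(2)[of I i f x\<^sub>0 y] by auto
qed (use assms in \<open>auto intro: sum_mono\<close>)

lemma net_demand_antimono:
  assumes "net_demand_assumption D"
  shows "antimono_on {0<..} D"
proof (rule monotone_onI)
  fix x y :: real
  assume "x \<in> {0<..}" "y \<in> {0<..}" "x \<le> y"
  then show "D y \<le> D x"
    using assms unfolding net_demand_assumption_def monotone_on_def
    by (cases "x = y") (auto simp: less_le)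
qed

lemma net_demand_continuous: "net_demand_assumption D \<Longrightarrow> continuous_on {0<..} D"
  unfolding net_demand_assumption_def by auto

lemma net_demand_eventually_pos:
  assumes "net_demand_assumption D"
  shows "\<forall>\<^sub>F x in at_right 0. 0 < D x"
  using assms unfolding net_demand_assumption_def filterlim_at_top_dense by auto

lemma surplus_pos_diff:
  assumes cont: "continuous_on {0<..} D" and "0 < x" "x \<le> y"
  shows "surplus_pos D y - surplus_pos D x = integral {x..y} D"
proof -
  have combine: "integral {a..b} D + integral {b..c} D = integral {a..c} D"
    if "0 < a" "a \<le> b" "b \<le> c" for a b c
    using that by (intro Henstock_Kurzweil_Integration.integral_combine
        integrable_continuous_real continuous_on_subset[OF cont]) auto
  consider "1 \<le> x" | "x < 1" "1 \<le> y" | "y < 1"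
    by linarith
  then show ?thesis
  proof cases
    case 1
    then show ?thesis using combine[of 1 x y] \<open>x \<le> y\<close> by (simp add: surplus_pos_def)
  next
    case 2
    then show ?thesis using combine[of x 1 y] \<open>0 < x\<close> by (simp add: surplus_pos_def)
  next
    case 3
    then show ?thesis using combine[of x y 1] \<open>0 < x\<close> \<open>x \<le> y\<close> by (simp add: surplus_pos_def)
  qed
qed

lemma has_real_derivative_surplus_pos:
  assumes cont: "continuous_on {0<..} D" and "0 < p"
  shows "(surplus_pos D has_real_derivative D p) (at p)"
proof -
  let ?a = "p / 2"
  have "((\<lambda>x. integral {?a..x} D) has_real_derivative D p) (at p within {?a..2 * p})"
    using \<open>0 < p\<close>
    by (intro integral_has_real_derivative continuous_on_subset[OF cont]) auto
  then have "((\<lambda>x. surplus_pos D ?a + integral {?a..x} D) has_real_derivative D p) (at p)"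
    using at_within_interior[of p "{?a..2 * p}"] \<open>0 < p\<close>
    by (auto intro!: derivative_eq_intros)
  then show ?thesis
  proof (rule has_field_derivative_transform_within_open[where S = "{?a<..}"])
    fix x
    assume "x \<in> {?a<..}"
    then show "surplus_pos D ?a + integral {?a..x} D = surplus_pos D x"
      using surplus_pos_diff[OF cont, of ?a x] \<open>0 < p\<close> by simp
  qed (use \<open>0 < p\<close> in auto)
qed

lemma surplus_pos_le_tangent:
  assumes cont: "continuous_on {0<..} D" and anti: "antimono_on {0<..} D"
    and "0 < p\<^sub>0" "0 < p"
  shows "surplus_pos D p \<le> surplus_pos D p\<^sub>0 + (p - p\<^sub>0) * D p\<^sub>0"
proof (cases "p\<^sub>0 \<le> p")
  case True
  have "integral {p\<^sub>0..p} D \<le> integral {p\<^sub>0..p} (\<lambda>_. D p\<^sub>0)"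
    using \<open>0 < p\<^sub>0\<close> anti
    by (intro integral_le integrable_continuous_real continuous_on_subset[OF cont])
       (auto simp: monotone_on_def)
  then show ?thesis
    using surplus_pos_diff[OF cont \<open>0 < p\<^sub>0\<close> True] True by (simp add: algebra_simps)
next
  case False
  have "integral {p..p\<^sub>0} (\<lambda>_. D p\<^sub>0) \<le> integral {p..p\<^sub>0} D"
    using \<open>0 < p\<close> anti
    by (intro integral_le integrable_continuous_real continuous_on_subset[OF cont])
       (auto simp: monotone_on_def)
  then show ?thesis
    using surplus_pos_diff[OF cont \<open>0 < p\<close>, of p\<^sub>0] False by (simp add: algebra_simps)
qed

lemma tendsto_surplus_at_zero:
  assumes cont: "continuous_on {0<..} D" and pos: "\<forall>\<^sub>F x in at_right 0. 0 < D x"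
  shows "((\<lambda>x. ereal (surplus_pos D x)) \<longlongrightarrow> surplus D 0) (at_right 0)"
proof -
  obtain b :: real where "0 < b" and b: "\<And>y. 0 < y \<Longrightarrow> y < b \<Longrightarrow> 0 < D y"
    using pos by (auto simp: eventually_at_right[of 0 1])
  let ?I = "{0<..<b}"
  have "ereal (surplus_pos D x) \<le> ereal (surplus_pos D y)"
    if "x \<in> ?I" "y \<in> ?I" "x \<le> y" for x y
  proof -
    have "0 \<le> integral {x..y} D"
      using that b by (intro integral_nonneg integrable_continuous_real
          continuous_on_subset[OF cont]) (auto intro: less_imp_le)
    then show ?thesis
      using surplus_pos_diff[OF cont _ \<open>x \<le> y\<close>] that by simp
  qed
  then have "((\<lambda>x. ereal (surplus_pos D x)) \<longlongrightarrow>
      Inf ((\<lambda>x. ereal (surplus_pos D x)) ` ({0<..} \<inter> ?I))) (at 0 within ({0<..} \<inter> ?I))"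
    by (intro Lim_right_bound[where K = "-\<infinity>"]) auto
  moreover have "at (0::real) within ({0<..} \<inter> ?I) = at_right 0"
    by (rule at_within_nhd[where S = "{..<b}"]) (auto simp: \<open>0 < b\<close>)
  ultimately obtain l where "((\<lambda>x. ereal (surplus_pos D x)) \<longlongrightarrow> l) (at_right 0)"
    by auto
  then show ?thesis
    by (simp add: surplus_def tendsto_Lim)
qed

lemma surplus_le_tangent:
  assumes cont: "continuous_on {0<..} D" and anti: "antimono_on {0<..} D"
    and pos: "\<forall>\<^sub>F x in at_right 0. 0 < D x" and "0 < p\<^sub>0" "0 \<le> p"
  shows "surplus D p \<le> ereal (surplus_pos D p\<^sub>0 + (p - p\<^sub>0) * D p\<^sub>0)"
proof (cases "p = 0")
  case True
  have "((\<lambda>x. ereal (surplus_pos D p\<^sub>0 + (x - p\<^sub>0) * D p\<^sub>0)) \<longlongrightarrow>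
      ereal (surplus_pos D p\<^sub>0 + (0 - p\<^sub>0) * D p\<^sub>0)) (at_right 0)"
    by (intro tendsto_intros)
  moreover have "\<forall>\<^sub>F x in at_right 0.
      ereal (surplus_pos D x) \<le> ereal (surplus_pos D p\<^sub>0 + (x - p\<^sub>0) * D p\<^sub>0)"
    using eventually_at_right_less[of 0]
    by eventually_elim (use surplus_pos_le_tangent[OF cont anti \<open>0 < p\<^sub>0\<close>] in simp)
  ultimately show ?thesis
    using True tendsto_le[OF trivial_limit_at_right_real _ tendsto_surplus_at_zero[OF cont pos]]
    by blast
next
  case False
  then show ?thesis
    using surplus_pos_le_tangent[OF cont anti \<open>0 < p\<^sub>0\<close>, of p] \<open>0 \<le> p\<close>
    by (simp add: surplus_def)
qed

lemma price_term_minimal_iff: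
  assumes nd: "net_demand_assumption D" and "0 < p\<^sub>0"
  shows "(\<forall>p\<ge>0. ereal (p\<^sub>0 * c) - surplus D p\<^sub>0 \<le> ereal (p * c) - surplus D p)
    \<longleftrightarrow> c = D p\<^sub>0"
proof
  assume min: "\<forall>p\<ge>0. ereal (p\<^sub>0 * c) - surplus D p\<^sub>0 \<le> ereal (p * c) - surplus D p"
  have "p\<^sub>0 * c - surplus_pos D p\<^sub>0 \<le> p * c - surplus_pos D p" if "0 < p" for p
    using min[rule_format, of p] that \<open>0 < p\<^sub>0\<close> by (simp add: surplus_def)
  moreover have "((\<lambda>p. p * c - surplus_pos D p) has_real_derivative c - D p\<^sub>0) (at p\<^sub>0)"
    using has_real_derivative_surplus_pos[OF net_demand_continuous[OF nd] \<open>0 < p\<^sub>0\<close>]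
    by (auto intro!: derivative_eq_intros)
  ultimately have "c - D p\<^sub>0 = 0"
    using \<open>0 < p\<^sub>0\<close>
    by (intro DERIV_local_min[where d = p\<^sub>0]) (auto simp: abs_if split: if_splits)
  then show "c = D p\<^sub>0"
    by simp
next
  assume "c = D p\<^sub>0"
  show "\<forall>p\<ge>0. ereal (p\<^sub>0 * c) - surplus D p\<^sub>0 \<le> ereal (p * c) - surplus D p"
  proof (intro allI impI)
    fix p :: real
    assume "0 \<le> p"
    have "ereal (p\<^sub>0 * c) - surplus D p\<^sub>0
        = ereal (p * c) - ereal (surplus_pos D p\<^sub>0 + (p - p\<^sub>0) * D p\<^sub>0)"
      using \<open>0 < p\<^sub>0\<close> \<open>c = D p\<^sub>0\<close> by (simp add: surplus_def algebra_simps)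
    also have "\<dots> \<le> ereal (p * c) - surplus D p"
      using surplus_le_tangent[OF net_demand_continuous[OF nd] net_demand_antimono[OF nd]
          net_demand_eventually_pos[OF nd] \<open>0 < p\<^sub>0\<close> \<open>0 \<le> p\<close>]
      by (intro ereal_minus_mono) auto
    finally show "ereal (p\<^sub>0 * c) - surplus D p\<^sub>0 \<le> ereal (p * c) - surplus D p" .
  qed
qed

definition excess_supply ::
  "('n::finite \<Rightarrow> ('n \<Rightarrow> real) \<Rightarrow> real \<Rightarrow> real \<Rightarrow> real) \<Rightarrow>
   ('n \<Rightarrow> 'n \<Rightarrow> real) \<Rightarrow> ('n \<Rightarrow> real) \<Rightarrow> ('n \<Rightarrow> real) \<Rightarrow> 'n \<Rightarrow> real" where
  "excess_supply F Q E L i = F i (Q i) (E i) (L i) - (\<Sum>j\<in>UNIV. Q j i)"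

lemma sum_profit_eq:
  fixes P :: "'n::finite \<Rightarrow> real"
  shows "(\<Sum>i\<in>UNIV. profit F W P PE i (Q i) (E i) (L i)) =
    (\<Sum>i\<in>UNIV. P i * excess_supply F Q E L i) - (\<Sum>i\<in>UNIV. PE * E i + W i (L i))"
proof -
  have "(\<Sum>i\<in>UNIV. \<Sum>j\<in>UNIV. P j * Q i j) = (\<Sum>i\<in>UNIV. P i * (\<Sum>j\<in>UNIV. Q j i))"
    by (subst sum.swap) (simp add: sum_distrib_left)
  then show ?thesis
    unfolding profit_def excess_supply_def
    by (simp add: sum_subtractf right_diff_distrib sum.distrib algebra_simps)
qed

lemma lagrangian_eq_price_terms:
  fixes P :: "'n::finite \<Rightarrow> real"
  shows "lagrangian F W D PE P Q E L =
    ereal (- (\<Sum>i\<in>UNIV. PE * E i + W i (L i))) +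
    (\<Sum>i\<in>UNIV. ereal (P i * excess_supply F Q E L i) - surplus (D i) (P i))"
proof -
  have "lagrangian F W D PE P Q E L =
      (\<Sum>i\<in>UNIV. ereal (profit F W P PE i (Q i) (E i) (L i))) + (\<Sum>i\<in>UNIV. - surplus (D i) (P i))"
    unfolding lagrangian_def minus_ereal_def by (simp add: sum.distrib)
  also have "\<dots> = ereal (- (\<Sum>i\<in>UNIV. PE * E i + W i (L i))) +
      ((\<Sum>i\<in>UNIV. ereal (P i * excess_supply F Q E L i)) + (\<Sum>i\<in>UNIV. - surplus (D i) (P i)))"
    by (simp add: sum_profit_eq add.assoc[symmetric])
  also have "\<dots> = ereal (- (\<Sum>i\<in>UNIV. PE * E i + W i (L i))) +
      (\<Sum>i\<in>UNIV. ereal (P i * excess_supply F Q E L i) - surplus (D i) (P i))"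
    unfolding minus_ereal_def by (simp add: sum.distrib)
  finally show ?thesis .
qed

lemma lagrangian_allocation_maximal_iff:
  fixes Ps :: "'n::finite \<Rightarrow> real"
  assumes Ps_pos: "\<forall>i. 0 < Ps i" and alloc: "nonneg_alloc Qs Es Ls"
  shows "(\<forall>Q E L. nonneg_alloc Q E L \<longrightarrow>
        lagrangian F W D PE Ps Q E L \<le> lagrangian F W D PE Ps Qs Es Ls)
    \<longleftrightarrow> (\<forall>i q e l. (\<forall>j. 0 \<le> q j) \<and> 0 \<le> e \<and> 0 \<le> l \<longrightarrow>
        profit F W Ps PE i q e l \<le> profit F W Ps PE i (Qs i) (Es i) (Ls i))"
proof -
  define A :: "(('n \<Rightarrow> real) \<times> real \<times> real) set"
    where "A = {q. \<forall>j. 0 \<le> q j} \<times> {0..} \<times> {0..}"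
  define f where "f i = (\<lambda>(q, e, l). ereal (profit F W Ps PE i q e l) - surplus (D i) (Ps i))"
    for i
  let ?x\<^sub>0 = "\<lambda>i. (Qs i, Es i, Ls i)"
  have lagrangian: "lagrangian F W D PE Ps Q E L = (\<Sum>i\<in>UNIV. f i (Q i, E i, L i))" for Q E L
    by (simp add: lagrangian_def f_def)
  have "(\<forall>Q E L. nonneg_alloc Q E L \<longrightarrow>
        lagrangian F W D PE Ps Q E L \<le> lagrangian F W D PE Ps Qs Es Ls)
    \<longleftrightarrow> (\<forall>x. (\<forall>i\<in>UNIV. x i \<in> A) \<longrightarrow> (\<Sum>i\<in>UNIV. f i (x i)) \<le> (\<Sum>i\<in>UNIV. f i (?x\<^sub>0 i)))"
  proof (intro iffI allI impI)
    fix x :: "'n \<Rightarrow> ('n \<Rightarrow> real) \<times> real \<times> real"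
    assume max: "\<forall>Q E L. nonneg_alloc Q E L \<longrightarrow>
        lagrangian F W D PE Ps Q E L \<le> lagrangian F W D PE Ps Qs Es Ls"
      and x: "\<forall>i\<in>UNIV. x i \<in> A"
    from x have "nonneg_alloc (\<lambda>i. fst (x i)) (\<lambda>i. fst (snd (x i))) (\<lambda>i. snd (snd (x i)))"
      by (auto simp: nonneg_alloc_def A_def mem_Times_iff)
    then show "(\<Sum>i\<in>UNIV. f i (x i)) \<le> (\<Sum>i\<in>UNIV. f i (?x\<^sub>0 i))"
      using max[rule_format, of "\<lambda>i. fst (x i)" "\<lambda>i. fst (snd (x i))" "\<lambda>i. snd (snd (x i))"]
      by (simp add: lagrangian)
  qed (auto simp: lagrangian nonneg_alloc_def A_def)
  also have "\<dots> \<longleftrightarrow> (\<forall>i\<in>UNIV. \<forall>y\<in>A. f i y \<le> f i (?x\<^sub>0 i))"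
    using Ps_pos alloc
    by (intro ereal_sum_maximal_iff) (auto simp: A_def f_def surplus_def nonneg_alloc_def)
  also have "\<dots> \<longleftrightarrow> (\<forall>i q e l. (\<forall>j. 0 \<le> q j) \<and> 0 \<le> e \<and> 0 \<le> l \<longrightarrow>
        profit F W Ps PE i q e l \<le> profit F W Ps PE i (Qs i) (Es i) (Ls i))"
    using Ps_pos by (auto simp: A_def f_def surplus_def)
  finally show ?thesis .
qed

lemma lagrangian_price_minimal_iff:
  fixes Ps :: "'n::finite \<Rightarrow> real"
  assumes ND: "\<forall>i. net_demand_assumption (D i)" and Ps_pos: "\<forall>i. 0 < Ps i"
  shows "(\<forall>P. (\<forall>i. 0 \<le> P i) \<longrightarrow>
        lagrangian F W D PE Ps Q E L \<le> lagrangian F W D PE P Q E L)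
    \<longleftrightarrow> (\<forall>i. F i (Q i) (E i) (L i) = D i (Ps i) + (\<Sum>j\<in>UNIV. Q j i))"
proof -
  define g where "g i p = ereal (p * excess_supply F Q E L i) - surplus (D i) p" for i p
  have "(\<forall>P. (\<forall>i. 0 \<le> P i) \<longrightarrow>
        lagrangian F W D PE Ps Q E L \<le> lagrangian F W D PE P Q E L)
    \<longleftrightarrow> (\<forall>P. (\<forall>i\<in>UNIV. P i \<in> {0..}) \<longrightarrow> (\<Sum>i\<in>UNIV. g i (Ps i)) \<le> (\<Sum>i\<in>UNIV. g i (P i)))"
    by (simp add: lagrangian_eq_price_terms g_def ereal_add_le_add_iff)
  also have "\<dots> \<longleftrightarrow> (\<forall>i\<in>UNIV. \<forall>p\<in>{0..}. g i (Ps i) \<le> g i p)"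
    using Ps_pos by (intro ereal_sum_minimal_iff) (auto simp: g_def surplus_def less_imp_le)
  also have "\<dots> \<longleftrightarrow> (\<forall>i. excess_supply F Q E L i = D i (Ps i))"
    using ND Ps_pos by (simp add: g_def Ball_def price_term_minimal_iff)
  also have "\<dots> \<longleftrightarrow> (\<forall>i. F i (Q i) (E i) (L i) = D i (Ps i) + (\<Sum>j\<in>UNIV. Q j i))"
    by (auto simp: excess_supply_def algebra_simps)
  finally show ?thesis .
qed

theorem lemma3p1:
  fixes F :: "'n::finite \<Rightarrow> ('n \<Rightarrow> real) \<Rightarrow> real \<Rightarrow> real \<Rightarrow> real"
    and W :: "'n \<Rightarrow> real \<Rightarrow> real"
    and D :: "'n \<Rightarrow> real \<Rightarrow> real"
    and PE :: real
    and Ps :: "'n \<Rightarrow> real" and Qs :: "'n \<Rightarrow> 'n \<Rightarrow> real" and Es Ls :: "'n \<Rightarrow> real"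
  assumes F_nonneg: "\<And>i q e l. (\<forall>j. 0 \<le> q j) \<Longrightarrow> 0 \<le> e \<Longrightarrow> 0 \<le> l \<Longrightarrow> 0 \<le> F i q e l"
    and W_pos: "\<And>i l. 0 \<le> l \<Longrightarrow> 0 < W i l"
    and PE_pos: "0 < PE"
    and ND: "\<And>i. net_demand_assumption (D i)"
    and Ps_pos: "\<And>i. 0 < Ps i"
    and alloc: "nonneg_alloc Qs Es Ls"
  shows "saddle_point F W D PE Ps Qs Es Ls \<longleftrightarrow> competitive_equilibrium F W D PE Ps Qs Es Ls"
proof -
  have pos: "\<forall>i. 0 < Ps i" and nd: "\<forall>i. net_demand_assumption (D i)"
    using Ps_pos ND by blast+
  show ?thesis
    unfolding saddle_point_def competitive_equilibrium_def
      lagrangian_allocation_maximal_iff[OF pos alloc] lagrangian_price_minimal_iff[OF nd pos]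
    using alloc pos by (auto intro: less_imp_le)
qed

end
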